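(* Let $\mathcal{C} \subseteq \mathcal{L}(M_n)$ be a right-CP-invariant convex cone. Then for a linear map $\Psi: M_n\to M_n$, we have $\Psi^{\dagger} \circ \Phi \in \mathcal{CP}(M_n)$ for all $\Phi \in \mathcal{C}$ if and only if $\Psi \in \mathcal{C}^{\circ}$.
   Context: $M_n$ is the space of $n\times n$ complex matrices, $\mathcal{L}(M_n)$ the space of linear maps $M_n\to M_n$, and $\mathcal{CP}(M_n)$ the cone of completely positive maps on $M_n$. For $\Phi\in\mathcal L(M_n)$, $\Phi^\dagger$ is the linear map with $\mathrm{Tr}(\Phi(X)Y)=\mathrm{Tr}(X\Phi^\dagger(Y))$ for all $X,Y\in M_n$. With $\{\mathbf e_i\}$ the standard basis of $\mathbb{C}^n$ and $E=\sum_{i,j=1}^n \mathbf e_i\mathbf e_j^*\otimes\mathbf e_i\mathbf e_j^*$, the Choi matrix of $\Phi$ is $C_\Phi = (\mathrm{id}_n\otimes\Phi)(E)$. The dual cone of a cone $\mathcal C\subseteq\mathcal L(M_n)$ is $\mathcal{C}^\circ = \{\Psi\in\mathcal L(M_n) : \mathrm{Tr}(C_\Phi C_\Psi)\ge 0 \text{ for all }\Phi\in\mathcal C\}$. A cone $\mathcal C\subseteq\mathcal L(M_n)$ is right-CP-invariant if $\Omega\circ\Psi\in\mathcal C$ whenever $\Omega\in\mathcal C$ and $\Psi\in\mathcal{CP}(M_n)$. *)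

theory Defs
  imports "HOL-Analysis.Analysis"
begin

text \<open>M_n is modelled as the type complex^'n^'n for a finite index type 'n
  (n = CARD('n)). Linear maps M_n -> M_n are complex-linear functions on this type.\<close>

type_synonym 'n mat = "complex^'n^'n"

definition cnonneg :: "complex \<Rightarrow> bool" where
  "cnonneg z \<longleftrightarrow> Im z = 0 \<and> 0 \<le> Re z"

definition mscale :: "complex \<Rightarrow> complex^'m^'k \<Rightarrow> complex^'m^'k" where
  "mscale c A = (\<chi> i j. c * A $ i $ j)"

definition mlinear :: "('n::finite mat \<Rightarrow> 'n mat) \<Rightarrow> bool" where
  "mlinear \<Phi> \<longleftrightarrow> (\<forall>X Y. \<Phi> (X + Y) = \<Phi> X + \<Phi> Y) \<and> (\<forall>c X. \<Phi> (mscale c X) = mscale c (\<Phi> X))"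

definition mtrace :: "complex^'n^'n \<Rightarrow> complex" where
  "mtrace A = (\<Sum>i\<in>UNIV. A $ i $ i)"

definition map_dual :: "('n::finite mat \<Rightarrow> 'n mat) \<Rightarrow> ('n mat \<Rightarrow> 'n mat)" where
  "map_dual \<Phi> = (THE \<Psi>. mlinear \<Psi> \<and> (\<forall>X Y. mtrace (\<Phi> X ** Y) = mtrace (X ** \<Psi> Y)))"

definition munit :: "'n \<Rightarrow> 'n \<Rightarrow> 'n::finite mat" where
  "munit i j = (\<chi> a b. if a = i \<and> b = j then 1 else 0)"

definition kron :: "complex^'n^'n \<Rightarrow> complex^'m^'m \<Rightarrow> complex^('n \<times> 'm)^('n \<times> 'm)" where
  "kron A B = (\<chi> p q. A $ fst p $ fst q * B $ snd p $ snd q)"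

definition choi :: "('n::finite mat \<Rightarrow> 'n mat) \<Rightarrow> complex^('n \<times> 'n)^('n \<times> 'n)" where
  "choi \<Phi> = (\<Sum>i\<in>UNIV. \<Sum>j\<in>UNIV. kron (munit i j) (\<Phi> (munit i j)))"

text \<open>Positive semidefiniteness of a k x k block matrix with blocks in M_n
  (i.e. an element of M_k(M_n) = M_{kn}); only blocks with indices < k matter.\<close>
definition psd_blocks :: "nat \<Rightarrow> (nat \<Rightarrow> nat \<Rightarrow> 'n::finite mat) \<Rightarrow> bool" where
  "psd_blocks k X \<longleftrightarrow> (\<forall>v :: nat \<Rightarrow> complex^'n.
     cnonneg (\<Sum>i<k. \<Sum>j<k. \<Sum>a\<in>UNIV. \<Sum>b\<in>UNIV. cnj (v i $ a) * X i j $ a $ b * v j $ b))"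

text \<open>Completely positive: linear and id_k \<otimes> Phi is positive for every k.\<close>
definition completely_positive :: "('n::finite mat \<Rightarrow> 'n mat) \<Rightarrow> bool" where
  "completely_positive \<Phi> \<longleftrightarrow> mlinear \<Phi> \<and>
     (\<forall>k X. psd_blocks k X \<longrightarrow> psd_blocks k (\<lambda>i j. \<Phi> (X i j)))"

definition CP :: "('n::finite mat \<Rightarrow> 'n mat) set" where
  "CP = {\<Phi>. completely_positive \<Phi>}"

definition convex_map_cone :: "('n::finite mat \<Rightarrow> 'n mat) set \<Rightarrow> bool" where
  "convex_map_cone C \<longleftrightarrow> C \<subseteq> {\<Phi>. mlinear \<Phi>} \<and>
     (\<forall>\<Phi>\<in>C. \<forall>\<Psi>\<in>C. \<forall>a b :: real. 0 \<le> a \<longrightarrow> 0 \<le> b \<longrightarrow>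
        (\<lambda>X. mscale (complex_of_real a) (\<Phi> X) + mscale (complex_of_real b) (\<Psi> X)) \<in> C)"

definition right_CP_invariant :: "('n::finite mat \<Rightarrow> 'n mat) set \<Rightarrow> bool" where
  "right_CP_invariant C \<longleftrightarrow> (\<forall>\<Omega>\<in>C. \<forall>\<Psi>\<in>CP. \<Omega> \<circ> \<Psi> \<in> C)"

definition dual_cone :: "('n::finite mat \<Rightarrow> 'n mat) set \<Rightarrow> ('n mat \<Rightarrow> 'n mat) set" where
  "dual_cone C = {\<Psi>. mlinear \<Psi> \<and> (\<forall>\<Phi>\<in>C. cnonneg (mtrace (choi \<Phi> ** choi \<Psi>)))}"

end

theory Submission
  imports Defs "HOL-Library.Complex_Order"
begin

(*
  The bridge is the identity Tr(C_Phi C_Psi) = <Omega, C_L Omega> with L = Psi^dagger o Phi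
  and Omega = sum_a e_a (x) e_a, written below as omega_value L.  Then:
  - if L is CP, testing complete positivity on the block matrix [e_a e_b^*]_{a,b} gives
    omega_value L >= 0;
  - conversely, precomposing with conjugations Y |-> K Y K^* (which are CP, so stay in C)
    turns omega_value into an arbitrary quadratic form of C_L, hence C_L is positive
    semidefinite, and a PSD Choi matrix forces complete positivity by the Schur product
    theorem (sum of entries of the Hadamard product of two PSD matrices is nonnegative).
*)

section \<open>Positive semidefinite matrices over a finite index set\<close>

definition qform :: "'x set \<Rightarrow> ('x \<Rightarrow> 'x \<Rightarrow> complex) \<Rightarrow> ('x \<Rightarrow> complex) \<Rightarrow> complex" where
  "qform S A z = (\<Sum>u\<in>S. \<Sum>v\<in>S. cnj (z u) * A u v * z v)"

definition psd :: "'x set \<Rightarrow> ('x \<Rightarrow> 'x \<Rightarrow> complex) \<Rightarrow> bool" where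
  "psd S A \<longleftrightarrow> (\<forall>z. 0 \<le> qform S A z)"

lemma cnonneg_iff: "cnonneg z \<longleftrightarrow> 0 \<le> z"
  by (auto simp: cnonneg_def less_eq_complex_def)

lemma nonneg_Im: "0 \<le> (z::complex) \<Longrightarrow> Im z = 0"
  by (simp add: less_eq_complex_def)

lemma cnj_mult_self_nonneg: "0 \<le> cnj z * (z::complex)"
  by (simp add: less_eq_complex_def)

lemma nonneg_inverse: "0 \<le> (z::complex) \<Longrightarrow> 0 \<le> inverse z"
  by (simp add: less_eq_complex_def)

text \<open>Principal submatrices of PSD matrices are PSD: extend test vectors by zero.\<close>

lemma qform_restrict:
  assumes "finite T" "S \<subseteq> T"
  shows "qform T A (\<lambda>u. if u \<in> S then z u else 0) = qform S A z"
proof -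
  let ?z = "\<lambda>u. if u \<in> S then z u else 0"
  have "qform T A ?z = (\<Sum>u\<in>S. \<Sum>v\<in>T. cnj (?z u) * A u v * ?z v)"
    unfolding qform_def by (rule sum.mono_neutral_right[OF assms]) auto
  also have "\<dots> = (\<Sum>u\<in>S. \<Sum>v\<in>S. cnj (?z u) * A u v * ?z v)"
    by (intro sum.cong refl sum.mono_neutral_right[OF assms]) auto
  also have "\<dots> = qform S A z"
    unfolding qform_def by (intro sum.cong refl) auto
  finally show ?thesis .
qed

lemma psd_mono: "finite T \<Longrightarrow> S \<subseteq> T \<Longrightarrow> psd T A \<Longrightarrow> psd S A"
  unfolding psd_def by (metis qform_restrict)

lemma qform_pair:
  "x \<noteq> y \<Longrightarrow> qform {x, y} A z = cnj (z x) * A x x * z x + cnj (z x) * A x y * z y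
                                 + cnj (z y) * A y x * z x + cnj (z y) * A y y * z y"
  by (simp add: qform_def)

lemma psd_diag:
  assumes "psd S A" "finite S" "x \<in> S"
  shows "0 \<le> A x x"
proof -
  have "psd {x} A" using psd_mono[OF assms(2) _ assms(1)] assms(3) by simp
  then have "0 \<le> qform {x} A (\<lambda>_. 1)" unfolding psd_def by blast
  then show ?thesis by (simp add: qform_def)
qed

text \<open>PSD matrices are Hermitian (tested on the 2x2 principal minors with vectors (1,1), (1,i)).\<close>

lemma psd_herm:
  assumes "psd S A" "finite S" "x \<in> S" "y \<in> S"
  shows "A x y = cnj (A y x)"
proof (cases "x = y")
  case True
  then show ?thesis using nonneg_Im[OF psd_diag[OF assms(1-3)]] by (simp add: complex_eq_iff)
next
  case False
  have P: "psd {x, y} A" using psd_mono[OF assms(2) _ assms(1)] assms(3,4) by simp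
  have diag: "Im (A x x) = 0" "Im (A y y) = 0" using psd_diag[OF P] nonneg_Im by simp_all
  have "0 \<le> qform {x, y} A (\<lambda>_. 1)" "0 \<le> qform {x, y} A (\<lambda>u. if u = x then 1 else \<i>)"
    using P unfolding psd_def by blast+
  moreover have "qform {x, y} A (\<lambda>_. 1) = A x x + A x y + A y x + A y y"
    using False by (simp add: qform_pair)
  moreover have "qform {x, y} A (\<lambda>u. if u = x then 1 else \<i>) = A x x + \<i> * A x y - \<i> * A y x + A y y"
    using False by (simp add: qform_pair algebra_simps)
  ultimately have "Im (A x y) + Im (A y x) = 0" "Re (A x y) - Re (A y x) = 0"
    using diag by (auto dest!: nonneg_Im)
  then show ?thesis by (simp add: complex_eq_iff)
qed

lemma psd_zero_row:
  assumes "psd S A" "finite S" "x \<in> S" "y \<in> S" "A x x = 0"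
  shows "A x y = 0"
proof (rule ccontr)
  let ?c = "A x y"
  define N where "N = (Re ?c)\<^sup>2 + (Im ?c)\<^sup>2"
  define s where "s = (Re (A y y) + 1) / (2 * N)"
  assume "?c \<noteq> 0"
  then have "N > 0" unfolding N_def by (simp add: complex_eq_iff sum_power2_gt_zero_iff)
  have "x \<noteq> y" using assms(5) \<open>?c \<noteq> 0\<close> by auto
  have P: "psd {x, y} A" using psd_mono[OF assms(2) _ assms(1)] assms(3,4) by simp
  have yx: "A y x = cnj ?c" using psd_herm[OF P, of y x] by simp
  have "0 \<le> qform {x, y} A (\<lambda>u. if u = x then - of_real s * ?c else 1)"
    using P unfolding psd_def by blast
  then have "0 \<le> Re (qform {x, y} A (\<lambda>u. if u = x then - of_real s * ?c else 1))"
    by (simp add: less_eq_complex_def)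
  also have "\<dots> = Re (A y y) - 2 * s * N"
    unfolding N_def using \<open>x \<noteq> y\<close> assms(5) yx by (simp add: qform_pair algebra_simps power2_eq_square)
  also have "\<dots> = -1" unfolding s_def using \<open>N > 0\<close> by (simp add: field_simps)
  finally show False by simp
qed

text \<open>Schur complement of A with respect to the pivot x.  Since u / 0 = 0 this is A itself
  when the pivot vanishes, so the decomposition A = A' + (A x x)^-1 a a^* holds unconditionally.\<close>

definition schur_compl :: "('x \<Rightarrow> 'x \<Rightarrow> complex) \<Rightarrow> 'x \<Rightarrow> 'x \<Rightarrow> 'x \<Rightarrow> complex" where
  "schur_compl A x u v = A u v - A u x * A x v / A x x"

lemma schur_compl_vanishes:
  assumes "psd S A" "finite S" "x \<in> S" "u \<in> S"
  shows "schur_compl A x x u = 0 \<and> schur_compl A x u x = 0"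
proof (cases "A x x = 0")
  case True
  have "A x u = 0" using psd_zero_row[OF assms True] .
  moreover have "A u x = 0" using psd_herm[OF assms(1,2,4,3)] calculation by simp
  ultimately show ?thesis by (simp add: schur_compl_def)
next
  case False
  then show ?thesis by (simp add: schur_compl_def)
qed

text \<open>The Schur complement of a PSD matrix is PSD: its form at z is the form of A at z
  extended by the optimal value t at the pivot.\<close>

lemma schur_compl_psd:
  assumes psdA: "psd (insert x S) A" and "finite S" "x \<notin> S"
  shows "psd S (schur_compl A x)"
proof (cases "A x x = 0")
  case True
  then have "schur_compl A x = A" by (simp add: schur_compl_def fun_eq_iff)
  then show ?thesis using psd_mono[OF _ _ psdA] assms(2) by auto
next
  case False
  show ?thesis unfolding psd_def
  proof
    fix z
    define q where "q = (\<Sum>v\<in>S. A x v * z v)"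
    define p where "p = (\<Sum>u\<in>S. cnj (z u) * A u x)"
    define t where "t = - q / A x x"
    have pivot: "t * A x x = - q" unfolding t_def using False by simp
    have zS: "(z(x := t)) u = z u" if "u \<in> S" for u using that assms(3) by auto
    have compl: "qform S (schur_compl A x) z = qform S A z - p * q / A x x"
      unfolding qform_def schur_compl_def p_def q_def
      by (simp add: algebra_simps sum_subtractf sum_distrib_left sum_distrib_right sum_divide_distrib)
    have "qform (insert x S) A (z(x := t)) = cnj t * A x x * t + (\<Sum>v\<in>S. cnj t * A x v * z v)
        + ((\<Sum>u\<in>S. cnj (z u) * A u x * t) + qform S A z)"
      unfolding qform_def using assms(2,3) zS by (simp add: sum.distrib cong: sum.cong)
    also have "\<dots> = cnj t * A x x * t + cnj t * q + p * t + qform S A z"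
      unfolding p_def q_def by (simp add: sum_distrib_left sum_distrib_right mult.assoc)
    also have "\<dots> = cnj t * (t * A x x + q) + p * t + qform S A z"
      by (simp add: algebra_simps)
    also have "\<dots> = p * t + qform S A z"
      using pivot by simp
    also have "\<dots> = qform S A z - p * q / A x x"
      unfolding t_def by simp
    finally show "0 \<le> qform S (schur_compl A x) z"
      using compl psdA unfolding psd_def by metis
  qed
qed

text \<open>Schur product inequality: for PSD A, B the entries of A \<circ> B sum to a nonnegative
  number.  Induction on the index set, peeling off a rank-one term with the Schur complement.\<close>

lemma schur_product_sum_nonneg:
  "finite S \<Longrightarrow> psd S A \<Longrightarrow> psd S B \<Longrightarrow> 0 \<le> (\<Sum>u\<in>S. \<Sum>v\<in>S. A u v * B u v)"
proof (induction S arbitrary: A rule: finite_induct)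
  case empty
  then show ?case by simp
next
  case (insert x S)
  let ?S' = "insert x S" and ?A' = "schur_compl A x"
  have fin: "finite ?S'" using insert.hyps by simp
  have decomp: "A u v * B u v = ?A' u v * B u v + inverse (A x x) * (A u x * A x v * B u v)" for u v
    by (simp add: schur_compl_def divide_inverse algebra_simps)
  have "(\<Sum>u\<in>?S'. \<Sum>v\<in>?S'. ?A' u v * B u v) = (\<Sum>u\<in>S. \<Sum>v\<in>S. ?A' u v * B u v)"
    using insert.hyps schur_compl_vanishes[OF insert.prems(1) fin] by (simp add: sum.insert)
  also have "0 \<le> \<dots>"
    using insert.IH[OF schur_compl_psd[OF insert.prems(1) insert.hyps]
                       psd_mono[OF fin _ insert.prems(2)]] by blast
  finally have compl_part: "0 \<le> (\<Sum>u\<in>?S'. \<Sum>v\<in>?S'. ?A' u v * B u v)" .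
  have herm: "A u x = cnj (A x u)" if "u \<in> ?S'" for u
    using psd_herm[OF insert.prems(1) fin that insertI1] by simp
  have "(\<Sum>u\<in>?S'. \<Sum>v\<in>?S'. A u x * A x v * B u v) = qform ?S' B (\<lambda>v. A x v)"
    unfolding qform_def by (intro sum.cong refl) (simp add: herm mult_ac)
  then have rank_one_part: "0 \<le> (\<Sum>u\<in>?S'. \<Sum>v\<in>?S'. A u x * A x v * B u v)"
    using insert.prems(2) unfolding psd_def by simp
  have "0 \<le> inverse (A x x)" using nonneg_inverse psd_diag[OF insert.prems(1) fin] by simp
  with compl_part rank_one_part
  have "0 \<le> (\<Sum>u\<in>?S'. \<Sum>v\<in>?S'. ?A' u v * B u v)
      + inverse (A x x) * (\<Sum>u\<in>?S'. \<Sum>v\<in>?S'. A u x * A x v * B u v)"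
    by (intro add_nonneg_nonneg mult_nonneg_nonneg)
  also have "\<dots> = (\<Sum>u\<in>?S'. \<Sum>v\<in>?S'. A u v * B u v)"
    by (simp add: decomp sum.distrib sum_distrib_left)
  finally show ?case .
qed

section \<open>Linear maps on M_n\<close>

lemma munit_nth [simp]: "munit i j $ a $ b = (if a = i \<and> b = j then 1 else 0)"
  by (simp add: munit_def)

lemma mscale_nth [simp]: "mscale c A $ i $ j = c * A $ i $ j"
  by (simp add: mscale_def)

lemma mlinear_add: "mlinear L \<Longrightarrow> L (X + Y) = L X + L Y"
  by (simp add: mlinear_def)

lemma mlinear_scale: "mlinear L \<Longrightarrow> L (mscale c X) = mscale c (L X)"
  by (simp add: mlinear_def)

lemma mlinear_zero: "mlinear L \<Longrightarrow> L 0 = 0"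
  using mlinear_add[of L 0 0] by simp

lemma mlinear_sum:
  assumes "mlinear L" "finite S"
  shows "L (\<Sum>x\<in>S. f x) = (\<Sum>x\<in>S. L (f x))"
  using assms(2)
  by (induction S rule: finite_induct) (simp_all add: mlinear_zero[OF assms(1)] mlinear_add[OF assms(1)])

lemma mlinear_comp: "mlinear F \<Longrightarrow> mlinear G \<Longrightarrow> mlinear (F \<circ> G)"
  by (simp add: mlinear_def)

lemma sum_delta_pair:
  fixes f :: "'a::finite \<Rightarrow> 'b::finite \<Rightarrow> 'c::comm_monoid_add"
  shows "(\<Sum>c\<in>UNIV. \<Sum>d\<in>UNIV. if c = a then if d = b then f c d else 0 else 0) = f a b"
proof -
  have "(\<Sum>d\<in>UNIV. if c = a then if d = b then f c d else 0 else 0) = (if c = a then f c b else 0)" for c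
    by (cases "c = a") simp_all
  then show ?thesis by simp
qed

lemma sum_UNIV_pair: "(\<Sum>p\<in>UNIV. f p) = (\<Sum>a\<in>UNIV. \<Sum>b\<in>UNIV. f (a, b))"
  by (simp add: sum.cartesian_product UNIV_Times_UNIV)

lemma sum_swap_middle:
  "(\<Sum>a\<in>A. \<Sum>b\<in>B. \<Sum>c\<in>C. \<Sum>d\<in>D. f a b c d) = (\<Sum>a\<in>A. \<Sum>c\<in>C. \<Sum>b\<in>B. \<Sum>d\<in>D. f a b c d)"
  by (rule sum.cong[OF refl]) (rule sum.swap)

lemma sum_swap_pairs:
  "(\<Sum>a\<in>A. \<Sum>b\<in>B. \<Sum>c\<in>C. \<Sum>d\<in>D. f a b c d) = (\<Sum>c\<in>C. \<Sum>d\<in>D. \<Sum>a\<in>A. \<Sum>b\<in>B. f a b c d)"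
proof -
  have "(\<Sum>a\<in>A. \<Sum>b\<in>B. \<Sum>c\<in>C. \<Sum>d\<in>D. f a b c d) = (\<Sum>a\<in>A. \<Sum>c\<in>C. \<Sum>b\<in>B. \<Sum>d\<in>D. f a b c d)"
    by (rule sum_swap_middle)
  also have "\<dots> = (\<Sum>c\<in>C. \<Sum>a\<in>A. \<Sum>b\<in>B. \<Sum>d\<in>D. f a b c d)"
    by (rule sum.swap)
  also have "\<dots> = (\<Sum>c\<in>C. \<Sum>a\<in>A. \<Sum>d\<in>D. \<Sum>b\<in>B. f a b c d)"
    by (intro sum.cong refl) (rule sum.swap)
  also have "\<dots> = (\<Sum>c\<in>C. \<Sum>d\<in>D. \<Sum>a\<in>A. \<Sum>b\<in>B. f a b c d)"
    by (rule sum.cong[OF refl]) (rule sum.swap)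
  finally show ?thesis .
qed

lemma munit_expansion: "(X::'n::finite mat) = (\<Sum>c\<in>UNIV. \<Sum>d\<in>UNIV. mscale (X$c$d) (munit c d))"
proof -
  have "(\<Sum>c\<in>UNIV. \<Sum>d\<in>UNIV. mscale (X$c$d) (munit c d)) $ a $ b
      = (\<Sum>c\<in>UNIV. \<Sum>d\<in>UNIV. if c = a then (if d = b then X$c$d else 0) else 0)" for a b
    by (simp add: sum_component) (intro sum.cong refl, auto)
  then show ?thesis by (simp add: vec_eq_iff sum_delta_pair)
qed

lemma mlinear_entry:
  assumes "mlinear L"
  shows "L X $ a $ b = (\<Sum>c\<in>UNIV. \<Sum>d\<in>UNIV. X$c$d * L (munit c d) $ a $ b)"
proof -
  have "L X = (\<Sum>c\<in>UNIV. \<Sum>d\<in>UNIV. mscale (X$c$d) (L (munit c d)))"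
    by (subst munit_expansion[of X]) (simp add: assms mlinear_sum mlinear_scale)
  then show ?thesis by (simp add: sum_component)
qed

lemma mtrace_mult: "mtrace (A ** B) = (\<Sum>i\<in>UNIV. \<Sum>k\<in>UNIV. A$i$k * B$k$i)"
  by (simp add: mtrace_def matrix_matrix_mult_def)

lemma mtrace_comm: "mtrace (A ** B) = mtrace (B ** (A::complex^'n::finite^'n))"
  unfolding mtrace_mult by (subst sum.swap) (simp add: mult.commute)

lemma mtrace_munit: "mtrace (munit b a ** M) = M$a$b"
proof -
  have "mtrace (munit b a ** M) = (\<Sum>i\<in>UNIV. \<Sum>k\<in>UNIV. if i = b then (if k = a then M$k$i else 0) else 0)"
    unfolding mtrace_mult by (intro sum.cong refl) auto
  then show ?thesis by (simp add: sum_delta_pair)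
qed

text \<open>Explicit formula for the adjoint with respect to the trace pairing; it shows that the
  definite description in map_dual is well defined.\<close>

definition adjoint :: "('n::finite mat \<Rightarrow> 'n mat) \<Rightarrow> 'n mat \<Rightarrow> 'n mat" where
  "adjoint \<Psi> Y = (\<chi> a b. mtrace (\<Psi> (munit b a) ** Y))"

lemma adjoint_trace:
  assumes "mlinear \<Psi>"
  shows "mtrace (\<Psi> X ** Y) = mtrace (X ** adjoint \<Psi> Y)"
proof -
  have "mtrace (\<Psi> X ** Y)
      = (\<Sum>j\<in>UNIV. \<Sum>l\<in>UNIV. \<Sum>i\<in>UNIV. \<Sum>k\<in>UNIV. X$i$k * \<Psi> (munit i k) $ j $ l * Y$l$j)"
    unfolding mtrace_mult mlinear_entry[OF assms, of X] by (simp add: sum_distrib_right)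
  also have "\<dots> = (\<Sum>i\<in>UNIV. \<Sum>k\<in>UNIV. \<Sum>j\<in>UNIV. \<Sum>l\<in>UNIV. X$i$k * \<Psi> (munit i k) $ j $ l * Y$l$j)"
    by (rule sum_swap_pairs)
  also have "\<dots> = mtrace (X ** adjoint \<Psi> Y)"
    unfolding mtrace_mult adjoint_def by (simp add: sum_distrib_left mult.assoc)
  finally show ?thesis .
qed

lemma adjoint_mlinear: "mlinear (adjoint \<Psi>)"
  unfolding mlinear_def adjoint_def
  by (simp add: vec_eq_iff mtrace_mult sum_distrib_left sum.distrib algebra_simps)

lemma map_dual_eq_adjoint:
  assumes "mlinear \<Psi>"
  shows "map_dual \<Psi> = adjoint \<Psi>"
  unfolding map_dual_def
proof (rule the_equality)
  show "mlinear (adjoint \<Psi>) \<and> (\<forall>X Y. mtrace (\<Psi> X ** Y) = mtrace (X ** adjoint \<Psi> Y))"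
    using adjoint_mlinear adjoint_trace[OF assms] by blast
next
  fix D assume D: "mlinear D \<and> (\<forall>X Y. mtrace (\<Psi> X ** Y) = mtrace (X ** D Y))"
  show "D = adjoint \<Psi>"
  proof
    fix Y
    have "D Y $ a $ b = adjoint \<Psi> Y $ a $ b" for a b
      using D adjoint_trace[OF assms, of "munit b a" Y]
      by (metis mtrace_munit)
    then show "D Y = adjoint \<Psi> Y" by (simp add: vec_eq_iff)
  qed
qed

lemma choi_nth: "choi \<Phi> $ p $ q = \<Phi> (munit (fst p) (fst q)) $ snd p $ snd q"
proof -
  have "choi \<Phi> $ p $ q = (\<Sum>i\<in>UNIV. \<Sum>j\<in>UNIV.
      if i = fst p then (if j = fst q then \<Phi> (munit i j) $ snd p $ snd q else 0) else 0)"
    unfolding choi_def kron_def by (simp add: sum_component) (intro sum.cong refl, auto)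
  then show ?thesis by (simp add: sum_delta_pair)
qed

text \<open>The expectation of the Choi matrix in the unnormalised maximally entangled vector
  Omega = sum_a e_a (x) e_a, i.e. the sum of the entries C_L((a,a),(b,b)).\<close>

definition omega_value :: "('n::finite mat \<Rightarrow> 'n mat) \<Rightarrow> complex" where
  "omega_value L = (\<Sum>a\<in>UNIV. \<Sum>b\<in>UNIV. L (munit a b) $ a $ b)"

lemma trace_choi_product:
  assumes "mlinear \<Psi>"
  shows "mtrace (choi \<Phi> ** choi \<Psi>) = omega_value (map_dual \<Psi> \<circ> \<Phi>)"
proof -
  have "mtrace (choi \<Phi> ** choi \<Psi>) = (\<Sum>i\<in>UNIV. \<Sum>a\<in>UNIV. \<Sum>j\<in>UNIV. \<Sum>b\<in>UNIV.
      \<Phi> (munit i j) $ a $ b * \<Psi> (munit j i) $ b $ a)"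
    unfolding mtrace_mult choi_nth by (simp add: sum_UNIV_pair)
  also have "\<dots> = (\<Sum>i\<in>UNIV. \<Sum>j\<in>UNIV. \<Sum>a\<in>UNIV. \<Sum>b\<in>UNIV.
      \<Phi> (munit i j) $ a $ b * \<Psi> (munit j i) $ b $ a)"
    by (rule sum_swap_middle)
  also have "\<dots> = (\<Sum>i\<in>UNIV. \<Sum>j\<in>UNIV. mtrace (\<Psi> (munit j i) ** \<Phi> (munit i j)))"
    by (simp add: mtrace_comm[of "\<Psi> _"]) (simp add: mtrace_mult)
  also have "\<dots> = omega_value (map_dual \<Psi> \<circ> \<Phi>)"
    by (simp add: omega_value_def map_dual_eq_adjoint[OF assms] adjoint_trace[OF assms] mtrace_munit)
  finally show ?thesis .
qed

definition conj_map :: "'n::finite mat \<Rightarrow> 'n mat \<Rightarrow> 'n mat" where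
  "conj_map K Y = (\<chi> a b. \<Sum>c\<in>UNIV. \<Sum>d\<in>UNIV. K$a$c * Y$c$d * cnj (K$b$d))"

lemma conj_map_nth: "conj_map K Y $ a $ b = (\<Sum>c\<in>UNIV. \<Sum>d\<in>UNIV. K$a$c * Y$c$d * cnj (K$b$d))"
  by (simp add: conj_map_def)

lemma conj_map_munit: "conj_map K (munit a b) $ c $ d = K$c$a * cnj (K$d$b)"
proof -
  have "conj_map K (munit a b) $ c $ d = (\<Sum>c'\<in>UNIV. \<Sum>d'\<in>UNIV.
      if c' = a then if d' = b then K$c$c' * cnj (K$d$d') else 0 else 0)"
    unfolding conj_map_nth by (intro sum.cong refl) auto
  then show ?thesis by (simp add: sum_delta_pair)
qed

lemma conj_map_form:
  fixes X K :: "'n::finite mat"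
  defines "w \<equiv> \<lambda>u::complex^'n. (\<chi> c. \<Sum>a\<in>UNIV. cnj (K$a$c) * u $ a)"
  shows "(\<Sum>a\<in>UNIV. \<Sum>b\<in>UNIV. cnj (v $ a) * conj_map K X $ a $ b * u $ b)
       = (\<Sum>c\<in>UNIV. \<Sum>d\<in>UNIV. cnj (w v $ c) * X $ c $ d * w u $ d)"
proof -
  have "(\<Sum>a\<in>UNIV. \<Sum>b\<in>UNIV. cnj (v $ a) * conj_map K X $ a $ b * u $ b)
     = (\<Sum>a\<in>UNIV. \<Sum>b\<in>UNIV. \<Sum>c\<in>UNIV. \<Sum>d\<in>UNIV. cnj (v $ a) * K$a$c * X$c$d * cnj (K$b$d) * u $ b)"
    by (simp add: conj_map_nth sum_distrib_left sum_distrib_right mult.assoc)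
  also have "\<dots> = (\<Sum>c\<in>UNIV. \<Sum>d\<in>UNIV. \<Sum>a\<in>UNIV. \<Sum>b\<in>UNIV.
      cnj (v $ a) * K$a$c * X$c$d * cnj (K$b$d) * u $ b)"
    by (rule sum_swap_pairs)
  also have "\<dots> = (\<Sum>c\<in>UNIV. \<Sum>d\<in>UNIV. cnj (w v $ c) * X $ c $ d * w u $ d)"
    unfolding w_def by (simp add: sum_distrib_left sum_distrib_right algebra_simps)
  finally show ?thesis .
qed

lemma conj_map_CP: "conj_map K \<in> CP"
  unfolding CP_def completely_positive_def
proof (intro CollectI conjI allI impI)
  show "mlinear (conj_map K)"
    unfolding mlinear_def by (simp add: vec_eq_iff conj_map_nth sum_distrib_left sum.distrib algebra_simps)
next
  fix k and X :: "nat \<Rightarrow> nat \<Rightarrow> 'a mat"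
  assume X: "psd_blocks k X"
  define w where "w \<equiv> \<lambda>u::complex^'a. (\<chi> c. \<Sum>a\<in>UNIV. cnj (K$a$c) * u $ a)"
  show "psd_blocks k (\<lambda>i j. conj_map K (X i j))"
    unfolding psd_blocks_def
  proof
    fix v :: "nat \<Rightarrow> complex^'a"
    have "cnonneg (\<Sum>i<k. \<Sum>j<k. \<Sum>a\<in>UNIV. \<Sum>b\<in>UNIV. cnj (w (v i) $ a) * X i j $ a $ b * w (v j) $ b)"
      using X[unfolded psd_blocks_def, rule_format, of "\<lambda>i. w (v i)"] by simp
    then show "cnonneg (\<Sum>i<k. \<Sum>j<k. \<Sum>a\<in>UNIV. \<Sum>b\<in>UNIV.
        cnj (v i $ a) * conj_map K (X i j) $ a $ b * v j $ b)"
      unfolding w_def conj_map_form by simp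
  qed
qed

section \<open>From the Choi matrix to complete positivity\<close>

lemma omega_value_conj_map:
  fixes L :: "'n::finite mat \<Rightarrow> 'n mat"
  assumes "mlinear L"
  shows "omega_value (L \<circ> conj_map (\<chi> c a. cnj (z (c, a)))) = qform UNIV (\<lambda>p q. choi L $ p $ q) z"
proof -
  let ?K = "\<chi> c a. cnj (z (c, a))"
  have "omega_value (L \<circ> conj_map ?K)
      = (\<Sum>a\<in>UNIV. \<Sum>b\<in>UNIV. \<Sum>c\<in>UNIV. \<Sum>d\<in>UNIV. cnj (z (c,a)) * L (munit c d) $ a $ b * z (d,b))"
    unfolding omega_value_def comp_def mlinear_entry[OF assms, of "conj_map ?K _"] conj_map_munit
    by (simp add: algebra_simps)
  also have "\<dots> = (\<Sum>c\<in>UNIV. \<Sum>d\<in>UNIV. \<Sum>a\<in>UNIV. \<Sum>b\<in>UNIV.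
      cnj (z (c,a)) * L (munit c d) $ a $ b * z (d,b))"
    by (rule sum_swap_pairs)
  also have "\<dots> = (\<Sum>c\<in>UNIV. \<Sum>a\<in>UNIV. \<Sum>d\<in>UNIV. \<Sum>b\<in>UNIV.
      cnj (z (c,a)) * L (munit c d) $ a $ b * z (d,b))"
    by (rule sum_swap_middle)
  also have "\<dots> = qform UNIV (\<lambda>p q. choi L $ p $ q) z"
    unfolding qform_def sum_UNIV_pair choi_nth by simp
  finally show ?thesis .
qed

definition block_compress ::
    "nat \<Rightarrow> (nat \<Rightarrow> nat \<Rightarrow> 'n::finite mat) \<Rightarrow> (nat \<Rightarrow> complex^'n) \<Rightarrow> 'n \<times> 'n \<Rightarrow> 'n \<times> 'n \<Rightarrow> complex" where
  "block_compress k X v p q = (\<Sum>i<k. \<Sum>j<k. cnj (v i $ snd p) * X i j $ fst p $ fst q * v j $ snd q)"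

text \<open>Its quadratic form at z is the block form of X at w_i(c) = sum_a z(c,a) v_i(a).\<close>

lemma block_compress_psd:
  fixes X :: "nat \<Rightarrow> nat \<Rightarrow> 'n::finite mat" and v :: "nat \<Rightarrow> complex^'n"
  assumes "psd_blocks k X"
  shows "psd UNIV (block_compress k X v)"
  unfolding psd_def
proof
  fix z :: "'n \<times> 'n \<Rightarrow> complex"
  define w where "w = (\<lambda>i. \<chi> c. \<Sum>a\<in>UNIV. z (c,a) * v i $ a)"
  have "qform UNIV (block_compress k X v) z = (\<Sum>c\<in>UNIV. \<Sum>a\<in>UNIV. \<Sum>d\<in>UNIV. \<Sum>b\<in>UNIV. \<Sum>i<k. \<Sum>j<k.
      cnj (z (c,a)) * (cnj (v i $ a) * X i j $ c $ d * v j $ b) * z (d,b))"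
    unfolding qform_def block_compress_def sum_UNIV_pair by (simp add: sum_distrib_left sum_distrib_right)
  also have "\<dots> = (\<Sum>c\<in>UNIV. \<Sum>d\<in>UNIV. \<Sum>a\<in>UNIV. \<Sum>b\<in>UNIV. \<Sum>i<k. \<Sum>j<k.
      cnj (z (c,a)) * (cnj (v i $ a) * X i j $ c $ d * v j $ b) * z (d,b))"
    by (rule sum_swap_middle)
  also have "\<dots> = (\<Sum>c\<in>UNIV. \<Sum>d\<in>UNIV. \<Sum>i<k. \<Sum>j<k. \<Sum>a\<in>UNIV. \<Sum>b\<in>UNIV.
      cnj (z (c,a)) * (cnj (v i $ a) * X i j $ c $ d * v j $ b) * z (d,b))"
    by (intro sum.cong refl sum_swap_pairs)
  also have "\<dots> = (\<Sum>i<k. \<Sum>j<k. \<Sum>c\<in>UNIV. \<Sum>d\<in>UNIV. \<Sum>a\<in>UNIV. \<Sum>b\<in>UNIV.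
      cnj (z (c,a)) * (cnj (v i $ a) * X i j $ c $ d * v j $ b) * z (d,b))"
    by (rule sum_swap_pairs)
  also have "\<dots> = (\<Sum>i<k. \<Sum>j<k. \<Sum>c\<in>UNIV. \<Sum>d\<in>UNIV. cnj (w i $ c) * X i j $ c $ d * w j $ d)"
    unfolding w_def by (simp add: sum_distrib_left sum_distrib_right algebra_simps)
  finally show "0 \<le> qform UNIV (block_compress k X v) z"
    using assms unfolding psd_blocks_def cnonneg_iff by simp
qed

lemma block_form_hadamard:
  fixes L :: "'n::finite mat \<Rightarrow> 'n mat"
  assumes "mlinear L"
  shows "(\<Sum>i<k. \<Sum>j<k. \<Sum>a\<in>UNIV. \<Sum>b\<in>UNIV. cnj (v i $ a) * L (X i j) $ a $ b * v j $ b)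
       = (\<Sum>p\<in>UNIV. \<Sum>q\<in>UNIV. choi L $ p $ q * block_compress k X v p q)"
proof -
  have entry: "(\<Sum>i<k. \<Sum>j<k. cnj (v i $ a) * L (X i j) $ a $ b * v j $ b)
      = (\<Sum>c\<in>UNIV. \<Sum>d\<in>UNIV. choi L $ (c,a) $ (d,b) * block_compress k X v (c,a) (d,b))" for a b
  proof -
    have "(\<Sum>i<k. \<Sum>j<k. cnj (v i $ a) * L (X i j) $ a $ b * v j $ b)
       = (\<Sum>i<k. \<Sum>j<k. \<Sum>c\<in>UNIV. \<Sum>d\<in>UNIV. L (munit c d) $ a $ b * (cnj (v i $ a) * X i j $ c $ d * v j $ b))"
      unfolding mlinear_entry[OF assms, of "X _ _"]
      by (simp add: sum_distrib_left sum_distrib_right algebra_simps)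
    also have "\<dots> = (\<Sum>c\<in>UNIV. \<Sum>d\<in>UNIV. \<Sum>i<k. \<Sum>j<k.
        L (munit c d) $ a $ b * (cnj (v i $ a) * X i j $ c $ d * v j $ b))"
      by (rule sum_swap_pairs)
    finally show ?thesis unfolding choi_nth block_compress_def by (simp add: sum_distrib_left)
  qed
  have "(\<Sum>i<k. \<Sum>j<k. \<Sum>a\<in>UNIV. \<Sum>b\<in>UNIV. cnj (v i $ a) * L (X i j) $ a $ b * v j $ b)
      = (\<Sum>a\<in>UNIV. \<Sum>b\<in>UNIV. \<Sum>c\<in>UNIV. \<Sum>d\<in>UNIV. choi L $ (c,a) $ (d,b) * block_compress k X v (c,a) (d,b))"
    by (subst sum_swap_pairs) (simp add: entry)
  also have "\<dots> = (\<Sum>c\<in>UNIV. \<Sum>a\<in>UNIV. \<Sum>d\<in>UNIV. \<Sum>b\<in>UNIV.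
      choi L $ (c,a) $ (d,b) * block_compress k X v (c,a) (d,b))"
    by (subst sum_swap_pairs) (rule sum_swap_middle)
  also have "\<dots> = (\<Sum>p\<in>UNIV. \<Sum>q\<in>UNIV. choi L $ p $ q * block_compress k X v p q)"
    unfolding sum_UNIV_pair by simp
  finally show ?thesis .
qed

lemma choi_psd_imp_CP:
  fixes L :: "'n::finite mat \<Rightarrow> 'n mat"
  assumes "mlinear L" and "psd UNIV (\<lambda>p q. choi L $ p $ q)"
  shows "L \<in> CP"
proof -
  have "psd_blocks k (\<lambda>i j. L (X i j))" if X: "psd_blocks k X" for k X
    unfolding psd_blocks_def cnonneg_iff
  proof
    fix v
    show "0 \<le> (\<Sum>i<k. \<Sum>j<k. \<Sum>a\<in>UNIV. \<Sum>b\<in>UNIV. cnj (v i $ a) * L (X i j) $ a $ b * v j $ b)"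
      unfolding block_form_hadamard[OF assms(1)]
      by (rule schur_product_sum_nonneg[OF finite_class.finite_UNIV assms(2) block_compress_psd[OF X]])
  qed
  then show ?thesis using assms(1) unfolding CP_def completely_positive_def by blast
qed

section \<open>From complete positivity to the Omega-expectation\<close>

text \<open>The k x k block matrix of matrix units [e_{h i} e_{h j}^*] is PSD (a Gram matrix).\<close>

lemma psd_blocks_munits:
  fixes h :: "nat \<Rightarrow> 'n::finite"
  shows "psd_blocks k (\<lambda>i j. munit (h i) (h j))"
  unfolding psd_blocks_def cnonneg_iff
proof
  fix v :: "nat \<Rightarrow> complex^'n"
  have "(\<Sum>i<k. \<Sum>j<k. \<Sum>a\<in>UNIV. \<Sum>b\<in>UNIV. cnj (v i $ a) * munit (h i) (h j) $ a $ b * v j $ b)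
      = (\<Sum>i<k. \<Sum>j<k. \<Sum>a\<in>UNIV. \<Sum>b\<in>UNIV.
           if a = h i then if b = h j then cnj (v i $ a) * v j $ b else 0 else 0)"
    by (intro sum.cong refl) auto
  also have "\<dots> = cnj (\<Sum>i<k. v i $ h i) * (\<Sum>j<k. v j $ h j)"
    by (simp add: sum_delta_pair sum_product)
  finally show "0 \<le> (\<Sum>i<k. \<Sum>j<k. \<Sum>a\<in>UNIV. \<Sum>b\<in>UNIV. cnj (v i $ a) * munit (h i) (h j) $ a $ b * v j $ b)"
    by (metis cnj_mult_self_nonneg)
qed

lemma CP_omega_value_nonneg:
  fixes L :: "'n::finite mat \<Rightarrow> 'n mat"
  assumes "L \<in> CP"
  shows "0 \<le> omega_value L"
proof -
  obtain h where h: "bij_betw h {..<CARD('n)} (UNIV::'n set)"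
    using ex_bij_betw_nat_finite[of "UNIV::'n set"] lessThan_atLeast0 by auto
  let ?e = "\<lambda>i. \<chi> a. if a = h i then 1 else (0::complex)"
  have basis_form: "(\<Sum>a\<in>UNIV. \<Sum>b\<in>UNIV. cnj (?e i $ a) * M $ a $ b * ?e j $ b) = M $ h i $ h j"
    for i j and M :: "'n mat"
  proof -
    have "(\<Sum>a\<in>UNIV. \<Sum>b\<in>UNIV. cnj (?e i $ a) * M $ a $ b * ?e j $ b)
        = (\<Sum>a\<in>UNIV. \<Sum>b\<in>UNIV. if a = h i then if b = h j then M $ a $ b else 0 else 0)"
      by (intro sum.cong refl) auto
    then show ?thesis by (simp add: sum_delta_pair)
  qed
  have "psd_blocks CARD('n) (\<lambda>i j. L (munit (h i) (h j)))"
    using assms psd_blocks_munits unfolding CP_def completely_positive_def by blast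
  then have "0 \<le> (\<Sum>i<CARD('n). \<Sum>j<CARD('n). \<Sum>a\<in>UNIV. \<Sum>b\<in>UNIV.
      cnj (?e i $ a) * L (munit (h i) (h j)) $ a $ b * ?e j $ b)"
    unfolding psd_blocks_def cnonneg_iff by (rule spec[where x = ?e])
  also have "\<dots> = (\<Sum>i<CARD('n). \<Sum>j<CARD('n). L (munit (h i) (h j)) $ h i $ h j)"
    by (simp only: basis_form)
  also have "\<dots> = omega_value L"
  proof -
    have reindex: "(\<Sum>i<CARD('n). g (h i)) = (\<Sum>a\<in>UNIV. g a)" for g :: "'n \<Rightarrow> complex"
      by (rule sum.reindex_bij_betw[OF h])
    have inner: "(\<Sum>j<CARD('n). L (munit a (h j)) $ a $ h j) = (\<Sum>b\<in>UNIV. L (munit a b) $ a $ b)" for a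
      using reindex[of "\<lambda>b. L (munit a b) $ a $ b"] by simp
    have outer: "(\<Sum>i<CARD('n). \<Sum>b\<in>UNIV. L (munit (h i) b) $ h i $ b) = omega_value L"
      using reindex[of "\<lambda>a. \<Sum>b\<in>UNIV. L (munit a b) $ a $ b"] unfolding omega_value_def by simp
    show ?thesis by (simp only: inner outer)
  qed
  finally show ?thesis .
qed

theorem proposition4p1:
  fixes C :: "('n::finite mat \<Rightarrow> 'n mat) set" and \<Psi> :: "'n mat \<Rightarrow> 'n mat"
  assumes "convex_map_cone C" and "right_CP_invariant C" and "mlinear \<Psi>"
  shows "(\<forall>\<Phi>\<in>C. map_dual \<Psi> \<circ> \<Phi> \<in> CP) \<longleftrightarrow> \<Psi> \<in> dual_cone C"
proof
  assume CP: "\<forall>\<Phi>\<in>C. map_dual \<Psi> \<circ> \<Phi> \<in> CP"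
  have "0 \<le> mtrace (choi \<Phi> ** choi \<Psi>)" if "\<Phi> \<in> C" for \<Phi>
    unfolding trace_choi_product[OF assms(3)] using CP that by (simp add: CP_omega_value_nonneg)
  then show "\<Psi> \<in> dual_cone C"
    using assms(3) unfolding dual_cone_def cnonneg_iff by blast
next
  assume dual: "\<Psi> \<in> dual_cone C"
  show "\<forall>\<Phi>\<in>C. map_dual \<Psi> \<circ> \<Phi> \<in> CP"
  proof
    fix \<Phi> assume "\<Phi> \<in> C"
    let ?L = "map_dual \<Psi> \<circ> \<Phi>"
    have "mlinear \<Phi>" using \<open>\<Phi> \<in> C\<close> assms(1) unfolding convex_map_cone_def by blast
    then have lin: "mlinear ?L"
      unfolding map_dual_eq_adjoint[OF assms(3)] by (rule mlinear_comp[OF adjoint_mlinear])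
    have pos: "0 \<le> omega_value (?L \<circ> conj_map K)" for K
    proof -
      have "\<Phi> \<circ> conj_map K \<in> C"
        using assms(2) \<open>\<Phi> \<in> C\<close> conj_map_CP unfolding right_CP_invariant_def by blast
      then have "0 \<le> mtrace (choi (\<Phi> \<circ> conj_map K) ** choi \<Psi>)"
        using dual unfolding dual_cone_def cnonneg_iff by blast
      then show ?thesis unfolding trace_choi_product[OF assms(3)] by (simp add: comp_assoc)
    qed
    have "psd UNIV (\<lambda>p q. choi ?L $ p $ q)"
      unfolding psd_def omega_value_conj_map[OF lin, symmetric] using pos by blast
    then show "?L \<in> CP" by (rule choi_psd_imp_CP[OF lin])
  qed
qed

end
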